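(* Let $p,r,s\ge1$, let $W$ be an $n\times n$ matrix weight on $\mathbb{R}^d$, and let $\{\mathcal{U}_Q\}_Q,\{\mathcal{V}_Q\}_Q$ be families (indexed by cubes) of self-adjoint positive definite $n\times n$ matrices. Then for each $\eta$-sparse family $\mathcal{S}$ and all $\vec h,\vec g:\mathbb{R}^d\to\mathbb{R}^n$, \begin{align*} \sum_{Q\in\mathcal{S}}\langle\langle W^{-\frac1p}\vec h\rangle\rangle_{r,Q}\langle\langle W^{\frac1p}\vec g\rangle\rangle_{s,Q}|Q| &\le\frac1\eta\sup_Q|\mathcal{V}_Q\mathcal{U}_Q|_{op}\,\|M_{\mathcal{V},W^{-\frac1p},r}(\vec h)\|_{L^p}\|M_{\mathcal{U},W^{\frac1p},s}(\vec g)\|_{L^{p'}}\\ &\le\frac1\eta\sup_Q|\mathcal{V}_Q\mathcal{U}_Q|_{op}\,\|M_{\mathcal{V},W^{-\frac1p},r}\|_{L^p\to L^p}\|M_{\mathcal{U},W^{\frac1p},s}\|_{L^{p'}\to L^{p'}}\|\vec h\|_{L^p}\|\vec g\|_{L^{p'}}, \end{align*} where $M_{\mathcal{V},W^{-\frac1p},r}(\vec h)(z)=\sup_{Q\ni z}\big(\frac1{|Q|}\int_Q|\mathcal{V}_Q^{-1}W^{-\frac1p}(x)\vec h(x)|^rdx\big)^{\frac1r}$ and $M_{\mathcal{U},W^{\frac1p},s}(\vec g)(z)=\sup_{Q\ni z}\big(\frac1{|Q|}\int_Q|\mathcal{U}_Q^{-1}W^{\frac1p}(x)\vec g(x)|^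sdx\big)^{\frac1s}$.
   Context: Matrix weight: $W(x)$ self-adjoint positive definite a.e.; $|\cdot|_{op}$ operator norm; $\|\vec h\|_{L^p}=\||\vec h|\|_{L^p(\mathbb{R}^d)}$, $p'=p/(p-1)$. For $1\le p<\infty$, $\langle\langle\vec f\rangle\rangle_{p,Q}=\{\frac1{|Q|}\int_Q\vec f\varphi:\varphi:Q\to\mathbb{R},\ (\frac1{|Q|}\int_Q|\varphi|^{p'})^{1/p'}\le1\}$; for compact convex symmetric $A,B$, $AB=\max\{\langle a,b\rangle:a\in A,b\in B\}$. $\mathcal{S}$ is $\eta$-sparse ($\eta\in(0,1)$) if there are pairwise disjoint $E_Q\subset Q$, $Q\in\mathcal{S}$, with $|E_Q|\ge\eta|Q|$. *)

theory Defs
  imports "HOL-Analysis.Analysis" "HOL-Probability.Essential_Supremum"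
begin

definition spd :: "real^'n^'n \<Rightarrow> bool" where
  "spd A \<longleftrightarrow> transpose A = A \<and> (\<forall>v. v \<noteq> 0 \<longrightarrow> 0 < v \<bullet> (A *v v))"

definition diag_mat :: "('n::finite \<Rightarrow> real) \<Rightarrow> real^'n^'n" where
  "diag_mat l = (\<chi> i j. if i = j then l i else 0)"

text \<open>Real powers A^t of a symmetric positive definite matrix via the spectral theorem:
  if A = U diag(l) U^T with U orthogonal and l > 0, then A^t = U diag(l^t) U^T
  (this is independent of the chosen diagonalisation).\<close>
definition matpow :: "real^'n^'n \<Rightarrow> real \<Rightarrow> real^'n^'n" where
  "matpow A t = (SOME B. \<exists>U l. orthogonal_matrix U \<and> (\<forall>i. 0 < l i) \<and>
      A = U ** diag_mat l ** transpose U \<and>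
      B = U ** diag_mat (\<lambda>i. l i powr t) ** transpose U)"

definition opnorm :: "real^'n^'m \<Rightarrow> real" where
  "opnorm A = onorm (\<lambda>v. A *v v)"

definition cubes :: "(real^'d) set set" where
  "cubes = {cbox a (a + (\<chi> i. l)) | a l. 0 < l}"

definition sparse :: "real \<Rightarrow> (real^'d) set set \<Rightarrow> bool" where
  "sparse \<eta> S \<longleftrightarrow> S \<subseteq> cubes \<and>
     (\<exists>E. (\<forall>Q\<in>S. E Q \<in> sets lebesgue \<and> E Q \<subseteq> Q \<and>
              \<eta> * measure lebesgue Q \<le> measure lebesgue (E Q)) \<and>
          disjoint_family_on E S)"

definition enn_powr :: "ennreal \<Rightarrow> real \<Rightarrow> ennreal" where
  "enn_powr a q = (if a = \<infinity> then \<infinity> else ennreal (enn2real a powr q))"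

definition Lp_enn :: "ereal \<Rightarrow> 'a measure \<Rightarrow> ('a \<Rightarrow> ennreal) \<Rightarrow> ennreal" where
  "Lp_enn p M F = (if p = \<infinity> then esssup M F
      else enn_powr (\<integral>\<^sup>+ x. enn_powr (F x) (real_of_ereal p) \<partial>M) (1 / real_of_ereal p))"

definition Lp_norm :: "ereal \<Rightarrow> 'a measure \<Rightarrow> ('a \<Rightarrow> 'b::real_normed_vector) \<Rightarrow> ennreal" where
  "Lp_norm p M f = Lp_enn p M (\<lambda>x. ennreal (norm (f x)))"

definition dual_exp :: "real \<Rightarrow> ereal" where
  "dual_exp p = (if p = 1 then \<infinity> else ereal (p / (p - 1)))"

text \<open>\<langle>\<langle>f\<rangle>\<rangle>_{r,Q} = { (1/|Q|) \<integral>_Q f \<phi> : (1/|Q| \<integral>_Q |\<phi>|^{r'})^{1/r'} \<le> 1 }; the normalised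
  r'-norm on Q is the L^{r'} norm w.r.t. the uniform (normalised) measure on Q.\<close>
definition cbody :: "real \<Rightarrow> (real^'d) set \<Rightarrow> (real^'d \<Rightarrow> real^'n) \<Rightarrow> (real^'n) set" where
  "cbody r Q f = {(1 / measure lebesgue Q) *\<^sub>R (LINT x:Q|lebesgue. \<phi> x *\<^sub>R f x) | \<phi>.
      \<phi> \<in> borel_measurable lebesgue \<and> set_integrable lebesgue Q (\<lambda>x. \<phi> x *\<^sub>R f x) \<and>
      Lp_norm (dual_exp r) (uniform_measure lebesgue Q) \<phi> \<le> 1}"

text \<open>AB = max { <a,b> : a \<in> A, b \<in> B } (nonnegative for symmetric sets).\<close>
definition body_prod :: "(real^'n) set \<Rightarrow> (real^'n) set \<Rightarrow> ennreal" where
  "body_prod A B = (SUP ab\<in>A \<times> B. ennreal (fst ab \<bullet> snd ab))"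

definition maxop :: "((real^'d) set \<Rightarrow> real^'n^'n) \<Rightarrow> (real^'d \<Rightarrow> real^'n^'n) \<Rightarrow> real
                      \<Rightarrow> (real^'d \<Rightarrow> real^'n) \<Rightarrow> real^'d \<Rightarrow> ennreal" where
  "maxop V A r h z = (SUP Q\<in>{Q\<in>cubes. z \<in> Q}.
      Lp_norm (ereal r) (uniform_measure lebesgue Q) (\<lambda>x. matrix_inv (V Q) *v (A x *v h x)))"

definition op_Lp_norm :: "ereal \<Rightarrow> ((real^'d \<Rightarrow> real^'n) \<Rightarrow> real^'d \<Rightarrow> ennreal) \<Rightarrow> ennreal" where
  "op_Lp_norm p T = (SUP f\<in>{f. f \<in> borel_measurable lebesgue \<and> Lp_norm p lebesgue f \<le> 1}.
      Lp_enn p lebesgue (T f))"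

end

(*
  Fix a cube Q of the sparse family and points a, b of the two convex bodies on Q.  Since
  a . b = (V_Q^-1 a) . (V_Q U_Q)(U_Q^-1 b) for symmetric V_Q, and a, b are averages of the
  functions against test functions of unit L^r', L^s' norm, Hoelder's inequality on Q bounds
  a . b by |V_Q U_Q| times the local L^r and L^s averages of V_Q^-1 W^(-1/p) h and
  U_Q^-1 W^(1/p) g; these are dominated by the two maximal functions at every point of Q.
  Sparseness replaces |Q| by |E_Q| / eta, and as the sets E_Q are pairwise disjoint the sum
  over the family becomes the integral of a product of two functions bounded by the maximal
  functions, so Hoelder's inequality in L^p x L^p' gives the first estimate.

  The second estimate is the definition of the operator norm together with the positive
  homogeneity of the maximal operators.  Because 0 * infinity = 0 in [0, infinity], the case
  of h or g of infinite norm needs that the operator norm is nonzero as soon as the maximal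
  function is: truncating h to a bounded function supported in one cube gives a function of
  finite norm with nonzero maximal function.
*)
theory Submission
  imports Defs
begin

section \<open>Powers and Lp norms with values in [0, \<infinity>]\<close>

lemma enn_powr_ennreal: "0 \<le> t \<Longrightarrow> enn_powr (ennreal t) q = ennreal (t powr q)"
  by (simp add: enn_powr_def)

lemma enn_powr_top [simp]: "enn_powr top q = top"
  by (simp add: enn_powr_def)

lemma enn_powr_zero [simp]: "enn_powr 0 q = 0"
  by (simp add: enn_powr_def)

lemma enn_powr_one [simp]: "enn_powr a 1 = a"
  by (cases a) (auto simp: enn_powr_ennreal)

lemma enn_powr_eq_0_iff [simp]: "enn_powr a q = 0 \<longleftrightarrow> a = 0"
  by (cases a) (auto simp: enn_powr_ennreal)

lemma enn_powr_eq_top_iff [simp]: "enn_powr a q = top \<longleftrightarrow> a = top"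
  by (cases a) (auto simp: enn_powr_ennreal)

lemma enn_powr_mono: "0 \<le> q \<Longrightarrow> a \<le> b \<Longrightarrow> enn_powr a q \<le> enn_powr b q"
  by (cases a; cases b) (auto simp: enn_powr_ennreal powr_mono2 top_unique)

lemma enn_powr_mult: "enn_powr (a * b) q = enn_powr a q * enn_powr b q"
proof (cases "a = 0 \<or> b = 0")
  case False
  then show ?thesis
    by (cases a; cases b)
      (auto simp: enn_powr_ennreal ennreal_mult_top ennreal_top_mult powr_mult
        simp flip: ennreal_mult)
qed auto

lemma measurable_enn_powr [measurable]:
  assumes [measurable]: "f \<in> borel_measurable M"
  shows "(\<lambda>x. enn_powr (f x) q) \<in> borel_measurable M"
  unfolding enn_powr_def by measurable

lemma pos_ereal_cases:
  fixes P :: ereal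
  assumes "0 < P"
  obtains "P = \<infinity>" | q where "P = ereal q" "0 < q"
  using assms by (cases P) auto

lemma Lp_enn_ereal: "Lp_enn (ereal q) M f = enn_powr (\<integral>\<^sup>+ x. enn_powr (f x) q \<partial>M) (1 / q)"
  by (simp add: Lp_enn_def)

lemma Lp_enn_infinity: "Lp_enn \<infinity> M f = esssup M f"
  by (simp add: Lp_enn_def)

lemma Lp_enn_mono:
  assumes "f \<in> borel_measurable M" "\<And>x. f x \<le> g x" "0 < P"
  shows "Lp_enn P M f \<le> Lp_enn P M g"
  using \<open>0 < P\<close>
proof (cases rule: pos_ereal_cases)
  case 1
  then show ?thesis
    using esssup_mono[OF assms(1,2)] by (simp add: Lp_enn_infinity)
next
  case (2 q)
  have "(\<integral>\<^sup>+ x. enn_powr (f x) q \<partial>M) \<le> (\<integral>\<^sup>+ x. enn_powr (g x) q \<partial>M)"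
    using 2 assms(2) by (intro nn_integral_mono enn_powr_mono) auto
  then show ?thesis
    using 2 by (simp add: Lp_enn_ereal enn_powr_mono)
qed

lemma Lp_enn_zero:
  assumes "0 < P"
  shows "Lp_enn P M (\<lambda>x. 0) = 0"
proof -
  have "esssup M (\<lambda>x. 0::ennreal) \<le> 0"
    by (rule esssup_I) auto
  with assms show ?thesis
    by (cases rule: pos_ereal_cases) (auto simp: Lp_enn_ereal Lp_enn_infinity)
qed

lemma nn_integral_cmult_le: "c * integral\<^sup>N M f \<le> (\<integral>\<^sup>+ x. c * f x \<partial>M)"
proof -
  have "c * integral\<^sup>S M g \<le> (\<integral>\<^sup>+ x. c * f x \<partial>M)" if "simple_function M g" "g \<le> f" for g
  proof -
    have "c * integral\<^sup>S M g = integral\<^sup>S M (\<lambda>x. c * g x)"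
      using that by simp
    also have "\<dots> \<le> (\<integral>\<^sup>+ x. c * f x \<partial>M)"
      unfolding nn_integral_def
      using that by (intro SUP_upper) (auto simp: le_fun_def intro: mult_left_mono)
    finally show ?thesis .
  qed
  then show ?thesis
    unfolding nn_integral_def SUP_mult_left_ennreal by (auto intro: SUP_least)
qed

lemma nn_integral_cmult_pos:
  assumes "0 < k"
  shows "(\<integral>\<^sup>+ x. ennreal k * f x \<partial>M) = ennreal k * integral\<^sup>N M f"
proof (rule antisym[OF _ nn_integral_cmult_le])
  have "ennreal (1 / k) * (\<integral>\<^sup>+ x. ennreal k * f x \<partial>M) \<le> integral\<^sup>N M f"
    using nn_integral_cmult_le[of "ennreal (1 / k)" M "\<lambda>x. ennreal k * f x"] assms
    by (simp add: mult.assoc[symmetric] flip: ennreal_mult)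
  then have "ennreal k * (ennreal (1 / k) * (\<integral>\<^sup>+ x. ennreal k * f x \<partial>M)) \<le> ennreal k * integral\<^sup>N M f"
    by (rule mult_left_mono) simp
  then show "(\<integral>\<^sup>+ x. ennreal k * f x \<partial>M) \<le> ennreal k * integral\<^sup>N M f"
    using assms by (simp add: mult.assoc[symmetric] flip: ennreal_mult)
qed

lemma esssup_cmult_ennreal:
  fixes F :: "'a \<Rightarrow> ennreal"
  assumes "0 < k"
  shows "esssup M (\<lambda>x. ennreal k * F x) = ennreal k * esssup M F"
proof -
  have le: "esssup M (\<lambda>x. ennreal c * G x) \<le> ennreal c * esssup M G"
    if "G \<in> borel_measurable M" for c and G :: "'a \<Rightarrow> ennreal"
    using that esssup_AE[of G M] by (intro esssup_I) (auto elim!: eventually_mono intro: mult_left_mono)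
  have cancel: "ennreal (1 / k) * (ennreal k * x) = x" "ennreal k * (ennreal (1 / k) * x) = x" for x
    using assms by (simp_all add: mult.assoc[symmetric] flip: ennreal_mult)
  show ?thesis
  proof (cases "F \<in> borel_measurable M")
    case True
    then have "(\<lambda>x. ennreal k * F x) \<in> borel_measurable M"
      by measurable
    from le[OF this, of "1 / k"]
    have "esssup M F \<le> ennreal (1 / k) * esssup M (\<lambda>x. ennreal k * F x)"
      by (simp add: cancel)
    from mult_left_mono[OF this, of "ennreal k"]
    have "ennreal k * esssup M F \<le> esssup M (\<lambda>x. ennreal k * F x)"
      by (simp add: cancel)
    with le[OF True, of k] show ?thesis
      by (rule antisym)
  next
    case False
    have "(\<lambda>x. ennreal k * F x) \<notin> borel_measurable M"
    proof
      assume "(\<lambda>x. ennreal k * F x) \<in> borel_measurable M"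
      then have "(\<lambda>x. ennreal (1 / k) * (ennreal k * F x)) \<in> borel_measurable M"
        by measurable
      with False show False
        by (simp add: cancel)
    qed
    with False assms show ?thesis
      by (simp add: esssup_non_measurable ennreal_mult_top)
  qed
qed

lemma Lp_enn_cmult:
  assumes "0 < k" "0 < P"
  shows "Lp_enn P M (\<lambda>x. ennreal k * F x) = ennreal k * Lp_enn P M F"
  using \<open>0 < P\<close>
proof (cases rule: pos_ereal_cases)
  case 1
  then show ?thesis
    by (simp add: Lp_enn_infinity esssup_cmult_ennreal[OF assms(1)])
next
  case (2 q)
  have "(\<integral>\<^sup>+ x. enn_powr (ennreal k * F x) q \<partial>M) = ennreal (k powr q) * (\<integral>\<^sup>+ x. enn_powr (F x) q \<partial>M)"
    using assms by (simp add: enn_powr_mult enn_powr_ennreal nn_integral_cmult_pos)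
  moreover have "enn_powr (ennreal (k powr q)) (1 / q) = ennreal k"
    using assms 2 by (simp add: enn_powr_ennreal powr_powr)
  ultimately show ?thesis
    using 2 by (simp add: Lp_enn_ereal enn_powr_mult)
qed

lemma Lp_norm_scaleR:
  assumes "0 < k" "0 < P"
  shows "Lp_norm P M (\<lambda>x. k *\<^sub>R f x) = ennreal k * Lp_norm P M f"
  using Lp_enn_cmult[OF assms] assms(1) by (simp add: Lp_norm_def ennreal_mult)

lemma AE_zero_if_Lp_norm_eq_0:
  assumes "f \<in> borel_measurable M" "Lp_norm P M f = 0" "0 < P"
  shows "AE x in M. f x = 0"
  using \<open>0 < P\<close>
proof (cases rule: pos_ereal_cases)
  case 1
  then show ?thesis
    using assms(2) esssup_AE[of "\<lambda>x. ennreal (norm (f x))" M]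
    by (auto simp: Lp_norm_def Lp_enn_infinity elim: eventually_mono)
next
  case (2 q)
  then have "(\<integral>\<^sup>+ x. enn_powr (ennreal (norm (f x))) q \<partial>M) = 0"
    using assms(2) by (simp add: Lp_norm_def Lp_enn_ereal)
  then show ?thesis
    using assms(1) by (subst (asm) nn_integral_0_iff_AE) (auto elim: eventually_mono)
qed

lemma nn_integral_enn_powr_cmult_indicator:
  assumes "A \<in> sets M"
  shows "(\<integral>\<^sup>+ x. enn_powr (c * indicator A x) q \<partial>M) = enn_powr c q * emeasure M A"
proof -
  have "(\<integral>\<^sup>+ x. enn_powr (c * indicator A x) q \<partial>M) = (\<integral>\<^sup>+ x. enn_powr c q * indicator A x \<partial>M)"
    by (intro nn_integral_cong) (simp add: indicator_def)
  with assms show ?thesis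
    by (simp add: nn_integral_cmult_indicator)
qed

lemma Lp_enn_cmult_indicator_neq_0:
  assumes "A \<in> sets M" "emeasure M A \<noteq> 0" "c \<noteq> 0" "0 < P"
  shows "Lp_enn P M (\<lambda>x. c * indicator A x) \<noteq> 0"
  using \<open>0 < P\<close>
proof (cases rule: pos_ereal_cases)
  case 1
  show ?thesis
  proof
    assume "Lp_enn P M (\<lambda>x. c * indicator A x) = 0"
    then have "AE x in M. c * indicator A x \<le> (0::ennreal)"
      using 1 esssup_AE[of "\<lambda>x. c * indicator A x" M] by (simp add: Lp_enn_infinity)
    then have "AE x in M. x \<notin> A"
      using assms(3) by (auto elim: eventually_mono simp: indicator_def)
    moreover have "{x \<in> space M. x \<in> A} = A"
      using sets.sets_into_space[OF assms(1)] by auto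
    ultimately show False
      using assms(1,2) by (simp add: AE_iff_measurable[OF _ refl])
  qed
next
  case (2 q)
  from 2 assms(2,3) show ?thesis
    by (simp add: Lp_enn_ereal nn_integral_enn_powr_cmult_indicator[OF assms(1)])
qed

lemma Lp_enn_cmult_indicator_finite:
  assumes "A \<in> sets M" "emeasure M A \<noteq> \<infinity>" "c \<noteq> \<infinity>" "0 < P"
  shows "Lp_enn P M (\<lambda>x. c * indicator A x) \<noteq> \<infinity>"
  using \<open>0 < P\<close>
proof (cases rule: pos_ereal_cases)
  case 1
  have "esssup M (\<lambda>x. c * indicator A x) \<le> c"
    using assms(1) by (intro esssup_I) (auto simp: indicator_def)
  with 1 assms(3) show ?thesis
    by (auto simp: Lp_enn_infinity top_unique)
next
  case (2 q)
  from 2 assms(2,3) show ?thesis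
    by (cases c) (simp_all add: Lp_enn_ereal nn_integral_enn_powr_cmult_indicator[OF assms(1)]
        enn_powr_ennreal ennreal_mult_eq_top_iff)
qed

section \<open>Hoelder's inequality\<close>

lemma Youngs_inequality_ennreal:
  fixes x y :: ennreal
  assumes pq: "1 < p" "1 < q" "1 / p + 1 / q = 1" and ab: "0 < a" "0 < b"
  shows "x * y \<le> ennreal (a * b / (p * a powr p)) * enn_powr x p
                 + ennreal (a * b / (q * b powr q)) * enn_powr y q"
proof -
  define c d where "c = a * b / (p * a powr p)" and "d = a * b / (q * b powr q)"
  have cd: "0 < c" "0 < d"
    using pq ab by (auto simp: c_def d_def)
  show ?thesis
  proof (cases "x = top \<or> y = top")
    case True
    with cd show ?thesis
      by (cases "x = 0 \<or> y = 0") (auto simp: c_def[symmetric] d_def[symmetric] ennreal_mult_top)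
  next
    case False
    then obtain u v where uv: "x = ennreal u" "y = ennreal v" "0 \<le> u" "0 \<le> v"
      by (cases x; cases y) auto
    have "u * v = a * b * ((u / a) * (v / b))"
      using ab by (simp add: field_simps)
    also have "\<dots> \<le> a * b * ((u / a) powr p / p + (v / b) powr q / q)"
      using pq ab uv by (intro mult_left_mono Youngs_inequality) auto
    also have "\<dots> = c * u powr p + d * v powr q"
      using ab uv by (simp add: c_def d_def powr_divide field_simps)
    finally have "ennreal (u * v) \<le> ennreal (c * u powr p + d * v powr q)"
      by (rule ennreal_leI)
    with cd uv show ?thesis
      by (simp add: c_def[symmetric] d_def[symmetric] enn_powr_ennreal flip: ennreal_mult)
  qed
qed

lemma dual_exp_pos: "1 \<le> p \<Longrightarrow> 0 < dual_exp p"
  by (simp add: dual_exp_def)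

lemma dual_exp_conjugate:
  assumes "1 < p"
  shows "dual_exp p = ereal (p / (p - 1))" "1 < p / (p - 1)" "1 / p + 1 / (p / (p - 1)) = 1"
  using assms by (auto simp: dual_exp_def field_simps)

lemma nn_integral_Hoelder_conjugate:
  assumes [measurable]: "f \<in> borel_measurable M" "g \<in> borel_measurable M"
    and pq: "1 < p" "1 < q" "1 / p + 1 / q = 1"
  shows "(\<integral>\<^sup>+ x. f x * g x \<partial>M) \<le> Lp_enn (ereal p) M f * Lp_enn (ereal q) M g"
proof -
  define A where "A = (\<integral>\<^sup>+ x. enn_powr (f x) p \<partial>M)"
  define B where "B = (\<integral>\<^sup>+ x. enn_powr (g x) q \<partial>M)"
  have rhs: "Lp_enn (ereal p) M f * Lp_enn (ereal q) M g = enn_powr A (1 / p) * enn_powr B (1 / q)"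
    by (simp add: Lp_enn_ereal A_def B_def)
  consider "A = 0 \<or> B = 0" | "A \<noteq> 0" "B \<noteq> 0" "A = top \<or> B = top"
    | "A \<noteq> 0" "B \<noteq> 0" "A \<noteq> top" "B \<noteq> top"
    by blast
  then show ?thesis
  proof cases
    case 1
    then have "AE x in M. f x * g x = 0"
      by (auto simp: A_def B_def nn_integral_0_iff_AE elim: eventually_mono)
    then have "(\<integral>\<^sup>+ x. f x * g x \<partial>M) = 0"
      by (subst nn_integral_0_iff_AE) (auto elim: eventually_mono)
    then show ?thesis
      by simp
  next
    case 2
    then show ?thesis
      by (auto simp: rhs ennreal_mult_top ennreal_top_mult)
  next
    case 3
    then obtain \<alpha> \<beta> where AB: "A = ennreal \<alpha>" "B = ennreal \<beta>" "0 < \<alpha>" "0 < \<beta>"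
      by (cases A; cases B) (auto simp: less_le)
    define a b where "a = \<alpha> powr (1 / p)" and "b = \<beta> powr (1 / q)"
    have ab: "0 < a" "0 < b" "a powr p = \<alpha>" "b powr q = \<beta>"
      using AB pq by (auto simp: a_def b_def powr_powr)
    have "(\<integral>\<^sup>+ x. f x * g x \<partial>M)
        \<le> (\<integral>\<^sup>+ x. ennreal (a * b / (p * a powr p)) * enn_powr (f x) p
                  + ennreal (a * b / (q * b powr q)) * enn_powr (g x) q \<partial>M)"
      using pq ab by (intro nn_integral_mono Youngs_inequality_ennreal) auto
    also have "\<dots> = ennreal (a * b / (p * \<alpha>)) * A + ennreal (a * b / (q * \<beta>)) * B"
      by (simp add: A_def B_def ab nn_integral_add nn_integral_cmult)
    also have "\<dots> = ennreal (a * b / p) + ennreal (a * b / q)"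
      using AB pq ab by (simp flip: ennreal_mult)
    also have "\<dots> = ennreal (a * b * (1 / p + 1 / q))"
      using pq ab by (simp add: ennreal_plus[symmetric] del: ennreal_plus, simp add: field_simps)
    also have "\<dots> = Lp_enn (ereal p) M f * Lp_enn (ereal q) M g"
      using AB pq ab by (simp add: rhs a_def b_def enn_powr_ennreal flip: ennreal_mult)
    finally show ?thesis .
  qed
qed

lemma nn_integral_Hoelder:
  assumes [measurable]: "f \<in> borel_measurable M" "g \<in> borel_measurable M" and "1 \<le> p"
  shows "(\<integral>\<^sup>+ x. f x * g x \<partial>M) \<le> Lp_enn (ereal p) M f * Lp_enn (dual_exp p) M g"
proof (cases "p = 1")
  case True
  have "AE x in M. f x * g x \<le> f x * esssup M g"
    using esssup_AE[of g M] by eventually_elim (rule mult_left_mono, auto)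
  then have "(\<integral>\<^sup>+ x. f x * g x \<partial>M) \<le> (\<integral>\<^sup>+ x. f x * esssup M g \<partial>M)"
    by (rule nn_integral_mono_AE)
  then show ?thesis
    using True by (simp add: dual_exp_def Lp_enn_ereal Lp_enn_infinity nn_integral_multc)
next
  case False
  with \<open>1 \<le> p\<close> show ?thesis
    using nn_integral_Hoelder_conjugate[OF assms(1,2), of p "p / (p - 1)"] dual_exp_conjugate[of p]
    by simp
qed

lemma matrix_inv_cancel:
  fixes A :: "real^'n^'n"
  assumes "invertible A"
  shows "A *v (matrix_inv A *v v) = v" "matrix_inv A *v (A *v v) = v"
proof -
  have "A ** matrix_inv A = mat 1 \<and> matrix_inv A ** A = mat 1"
    using assms unfolding invertible_def matrix_inv_def by (rule someI_ex)
  then show "A *v (matrix_inv A *v v) = v" "matrix_inv A *v (A *v v) = v"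
    by (simp_all add: matrix_vector_mul_assoc)
qed

lemma spd_invertible: "spd A \<Longrightarrow> invertible A"
  unfolding invertible_left_inverse matrix_left_invertible_ker spd_def
  by (metis inner_zero_right less_irrefl)

lemma norm_matrix_vector_le_opnorm: "norm (A *v x) \<le> opnorm A * norm x"
  unfolding opnorm_def by (rule onorm[OF matrix_vector_mul_bounded_linear])

lemma opnorm_nonneg: "0 \<le> opnorm A"
  unfolding opnorm_def by (rule onorm_pos_le[OF matrix_vector_mul_bounded_linear])

lemma inner_le_opnorm_matrix_inv:
  fixes U V :: "real^'n^'n"
  assumes "transpose V = V" "invertible V" "invertible U"
  shows "a \<bullet> b \<le> norm (matrix_inv V *v a) * opnorm (V ** U) * norm (matrix_inv U *v b)"
proof -
  have "(matrix_inv V *v a) v* V = a"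
    using matrix_inv_cancel(1)[OF assms(2)] vector_transpose_matrix[of _ V] assms(1) by metis
  moreover have "V *v b = (V ** U) *v (matrix_inv U *v b)"
    by (simp add: matrix_inv_cancel(1)[OF assms(3)] flip: matrix_vector_mul_assoc)
  ultimately have "a \<bullet> b = (matrix_inv V *v a) \<bullet> ((V ** U) *v (matrix_inv U *v b))"
    by (metis dot_lmul_matrix)
  also have "\<dots> \<le> norm (matrix_inv V *v a) * norm ((V ** U) *v (matrix_inv U *v b))"
    by (rule norm_cauchy_schwarz)
  also have "\<dots> \<le> norm (matrix_inv V *v a) * (opnorm (V ** U) * norm (matrix_inv U *v b))"
    by (intro mult_left_mono norm_matrix_vector_le_opnorm norm_ge_zero)
  finally show ?thesis
    by (simp add: mult.assoc)
qed

lemma cube_lebesgue_measure: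
  fixes Q :: "(real^'d) set"
  assumes "Q \<in> cubes"
  shows "Q \<in> sets lebesgue" "emeasure lebesgue Q \<noteq> 0" "emeasure lebesgue Q \<noteq> \<infinity>"
proof -
  obtain a and l :: real where Q: "Q = cbox a (a + (\<chi> i. l))" "0 < l"
    using assms by (auto simp: cubes_def)
  then have "a \<in> cbox a (a + (\<chi> i. l))"
    by (simp add: mem_box_cart)
  then have "measure lborel (cbox a (a + (\<chi> i. l))) = l ^ CARD('d)"
    by (subst content_cbox_cart) auto
  then have "measure lebesgue Q = l ^ CARD('d)"
    by (simp add: Q(1))
  moreover have "emeasure lebesgue Q \<noteq> \<infinity>"
    using emeasure_lborel_cbox_finite[of a "a + (\<chi> i. l)"] by (simp add: Q)
  ultimately show "Q \<in> sets lebesgue" "emeasure lebesgue Q \<noteq> 0" "emeasure lebesgue Q \<noteq> \<infinity>"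
    using Q by (auto simp: emeasure_eq_ennreal_measure)
qed

section \<open>Convex body averages\<close>

lemma norm_average_le_Lp_Hoelder:
  fixes F :: "'a \<Rightarrow> 'b::{banach, second_countable_topology}"
  assumes Q [measurable]: "Q \<in> sets M" and "emeasure M Q \<noteq> 0" "emeasure M Q \<noteq> \<infinity>"
    and [measurable]: "\<phi> \<in> borel_measurable M"
    and int: "set_integrable M Q (\<lambda>x. \<phi> x *\<^sub>R F x)" and "1 \<le> r"
  shows "ennreal (norm ((1 / measure M Q) *\<^sub>R (LINT x:Q|M. \<phi> x *\<^sub>R F x)))
           \<le> Lp_norm (ereal r) (uniform_measure M Q) F * Lp_norm (dual_exp r) (uniform_measure M Q) \<phi>"
proof -
  define m where "m = measure M Q"
  have \<mu>: "emeasure M Q = ennreal m"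
    using assms(3) by (simp add: m_def emeasure_eq_ennreal_measure)
  with assms(2) have "0 < m"
    by (auto simp: m_def order.strict_iff_order)
  define \<psi> where "\<psi> x = indicator Q x *\<^sub>R (\<phi> x *\<^sub>R F x)" for x
  have \<psi>: "integrable M \<psi>"
    using int unfolding set_integrable_def \<psi>_def[abs_def] .
  then have [measurable]: "\<psi> \<in> borel_measurable M"
    by (rule borel_measurable_integrable)
  have avg: "(LINT x:Q|M. \<phi> x *\<^sub>R F x) = integral\<^sup>L M \<psi>"
    unfolding set_lebesgue_integral_def \<psi>_def[abs_def] ..
  \<comment> \<open>\<open>F\<close> itself need not be measurable; \<open>G\<close> is a measurable substitute for it on \<open>{\<phi> \<noteq> 0}\<close>\<close>
  define G where "G x = inverse (\<phi> x) *\<^sub>R \<psi> x" for x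
  have [measurable]: "G \<in> borel_measurable M"
    unfolding G_def by measurable
  have norm_\<psi>: "norm (\<psi> x) = norm (G x) * norm (\<phi> x)" for x
    by (cases "\<phi> x = 0") (auto simp: G_def \<psi>_def indicator_def)
  have norm_G: "norm (G x) \<le> norm (F x)" for x
    by (cases "\<phi> x = 0") (auto simp: G_def \<psi>_def indicator_def)
  have "norm ((1 / m) *\<^sub>R (LINT x:Q|M. \<phi> x *\<^sub>R F x)) \<le> (\<integral>x. norm (\<psi> x) \<partial>M) / m"
    using \<open>0 < m\<close> by (simp add: avg divide_right_mono)
  then have "ennreal (norm ((1 / m) *\<^sub>R (LINT x:Q|M. \<phi> x *\<^sub>R F x)))
      \<le> ennreal (\<integral>x. norm (\<psi> x) \<partial>M) / emeasure M Q"
    using \<open>0 < m\<close> by (simp add: \<mu> divide_ennreal ennreal_leI)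
  also have "\<dots> = (\<integral>\<^sup>+ x. ennreal (norm (\<psi> x)) \<partial>M) / emeasure M Q"
    using \<psi> by (simp add: nn_integral_eq_integral)
  also have "\<dots> = (\<integral>\<^sup>+ x. ennreal (norm (G x)) * ennreal (norm (\<phi> x)) \<partial>uniform_measure M Q)"
  proof -
    have "ennreal (norm (\<psi> x)) = ennreal (norm (G x)) * ennreal (norm (\<phi> x)) * indicator Q x" for x
      using norm_\<psi>[of x] by (auto simp: \<psi>_def indicator_def ennreal_mult)
    then show ?thesis
      by (simp add: nn_integral_uniform_measure)
  qed
  also have "\<dots> \<le> Lp_norm (ereal r) (uniform_measure M Q) G * Lp_norm (dual_exp r) (uniform_measure M Q) \<phi>"
    unfolding Lp_norm_def using \<open>1 \<le> r\<close> by (intro nn_integral_Hoelder) auto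
  also have "\<dots> \<le> Lp_norm (ereal r) (uniform_measure M Q) F * Lp_norm (dual_exp r) (uniform_measure M Q) \<phi>"
    unfolding Lp_norm_def using \<open>1 \<le> r\<close> norm_G by (intro mult_right_mono Lp_enn_mono) auto
  finally show ?thesis
    by (simp add: m_def)
qed

lemma norm_matrix_cbody_le:
  fixes T :: "real^'n^'m" and F :: "real^'d \<Rightarrow> real^'n"
  assumes "Q \<in> sets lebesgue" "emeasure lebesgue Q \<noteq> 0" "emeasure lebesgue Q \<noteq> \<infinity>"
    and "1 \<le> r" and "a \<in> cbody r Q F"
  shows "ennreal (norm (T *v a)) \<le> Lp_norm (ereal r) (uniform_measure lebesgue Q) (\<lambda>x. T *v F x)"
proof -
  obtain \<phi> where a: "a = (1 / measure lebesgue Q) *\<^sub>R (LINT x:Q|lebesgue. \<phi> x *\<^sub>R F x)"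
    and \<phi>: "\<phi> \<in> borel_measurable lebesgue" "Lp_norm (dual_exp r) (uniform_measure lebesgue Q) \<phi> \<le> 1"
    and int: "set_integrable lebesgue Q (\<lambda>x. \<phi> x *\<^sub>R F x)"
    using assms(5) unfolding cbody_def by blast
  have lin: "bounded_linear (\<lambda>v. T *v v)"
    by (rule matrix_vector_mul_bounded_linear)
  have int_T: "set_integrable lebesgue Q (\<lambda>x. \<phi> x *\<^sub>R (T *v F x))"
    using integrable_bounded_linear[OF lin int[unfolded set_integrable_def]]
    by (simp add: set_integrable_def matrix_vector_mult_scaleR)
  have "T *v a = (1 / measure lebesgue Q) *\<^sub>R (LINT x:Q|lebesgue. \<phi> x *\<^sub>R (T *v F x))"
    using integral_bounded_linear[OF lin int[unfolded set_integrable_def]]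
    by (simp add: a set_lebesgue_integral_def matrix_vector_mult_scaleR)
  also note norm_average_le_Lp_Hoelder[OF assms(1-3) \<phi>(1) int_T assms(4)]
  also have "Lp_norm (ereal r) (uniform_measure lebesgue Q) (\<lambda>x. T *v F x)
      * Lp_norm (dual_exp r) (uniform_measure lebesgue Q) \<phi>
      \<le> Lp_norm (ereal r) (uniform_measure lebesgue Q) (\<lambda>x. T *v F x)"
    using mult_left_mono[OF \<phi>(2)] by simp
  finally show ?thesis .
qed

lemma body_prod_cbody_le:
  fixes F G :: "real^'d \<Rightarrow> real^'n" and U V :: "real^'n^'n"
  assumes Q: "Q \<in> sets lebesgue" "emeasure lebesgue Q \<noteq> 0" "emeasure lebesgue Q \<noteq> \<infinity>"
    and "spd U" "spd V" "1 \<le> r" "1 \<le> s"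
  shows "body_prod (cbody r Q F) (cbody s Q G)
           \<le> ennreal (opnorm (V ** U))
             * Lp_norm (ereal r) (uniform_measure lebesgue Q) (\<lambda>x. matrix_inv V *v F x)
             * Lp_norm (ereal s) (uniform_measure lebesgue Q) (\<lambda>x. matrix_inv U *v G x)"
  unfolding body_prod_def
proof (rule SUP_least, clarify)
  fix a b assume ab: "a \<in> cbody r Q F" "b \<in> cbody s Q G"
  have "ennreal (a \<bullet> b) \<le> ennreal (norm (matrix_inv V *v a) * opnorm (V ** U) * norm (matrix_inv U *v b))"
    using assms(4,5) by (intro ennreal_leI inner_le_opnorm_matrix_inv) (auto simp: spd_def spd_invertible)
  also have "\<dots> = ennreal (opnorm (V ** U)) * ennreal (norm (matrix_inv V *v a))
                    * ennreal (norm (matrix_inv U *v b))"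
    by (simp add: opnorm_nonneg mult_ac flip: ennreal_mult)
  also have "\<dots> \<le> ennreal (opnorm (V ** U))
             * Lp_norm (ereal r) (uniform_measure lebesgue Q) (\<lambda>x. matrix_inv V *v F x)
             * Lp_norm (ereal s) (uniform_measure lebesgue Q) (\<lambda>x. matrix_inv U *v G x)"
    using assms(6,7) ab by (intro mult_mono norm_matrix_cbody_le[OF Q] order_refl) auto
  finally show "ennreal (fst (a, b) \<bullet> snd (a, b)) \<le> \<dots>"
    by simp
qed

section \<open>Sparse domination\<close>

lemma sum_indicator_disjoint_family:
  fixes f :: "'i \<Rightarrow> 'b::semiring_1"
  assumes "disjoint_family_on E S" "Fin \<subseteq> S" "finite Fin" "Q \<in> Fin" "x \<in> E Q"
  shows "(\<Sum>Q'\<in>Fin. f Q' * indicator (E Q') x) = f Q"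
proof -
  have "(\<Sum>Q'\<in>Fin. f Q' * indicator (E Q') x) = (\<Sum>Q'\<in>Fin. if Q' = Q then f Q else 0)"
    using assms by (intro sum.cong) (auto simp: indicator_def disjoint_family_on_def)
  with assms(3,4) show ?thesis
    by simp
qed

lemma sum_indicator_disjoint_mult:
  fixes a b :: "'i \<Rightarrow> 'b::comm_semiring_1"
  assumes "disjoint_family_on E S" "Fin \<subseteq> S" "finite Fin"
  shows "(\<Sum>Q\<in>Fin. a Q * indicator (E Q) x) * (\<Sum>Q\<in>Fin. b Q * indicator (E Q) x)
           = (\<Sum>Q\<in>Fin. a Q * b Q * indicator (E Q) x)"
proof (cases "\<exists>Q\<in>Fin. x \<in> E Q")
  case True
  then obtain Q where "Q \<in> Fin" "x \<in> E Q"
    by blast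
  then show ?thesis
    by (simp add: sum_indicator_disjoint_family[OF assms])
qed auto

lemma sum_indicator_disjoint_le:
  fixes a :: "'i \<Rightarrow> ennreal"
  assumes "disjoint_family_on E S" "Fin \<subseteq> S" "finite Fin"
    and "\<And>Q. Q \<in> Fin \<Longrightarrow> x \<in> E Q \<Longrightarrow> a Q \<le> F x"
  shows "(\<Sum>Q\<in>Fin. a Q * indicator (E Q) x) \<le> F x"
proof (cases "\<exists>Q\<in>Fin. x \<in> E Q")
  case True
  then obtain Q where "Q \<in> Fin" "x \<in> E Q"
    by blast
  then show ?thesis
    by (simp add: sum_indicator_disjoint_family[OF assms(1-3)] assms(4))
qed auto

lemma borel_measurable_sum_cmult_indicator:
  assumes "\<And>Q. Q \<in> Fin \<Longrightarrow> E Q \<in> sets M"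
  shows "(\<lambda>x. \<Sum>Q\<in>Fin. (a Q :: ennreal) * indicator (E Q) x) \<in> borel_measurable M"
  using assms
  by (intro borel_measurable_sum borel_measurable_times_ennreal borel_measurable_indicator) auto

lemma sum_disjoint_le_Lp_Hoelder:
  fixes a b :: "'i \<Rightarrow> ennreal"
  assumes "disjoint_family_on E S" "Fin \<subseteq> S" "finite Fin" "\<And>Q. Q \<in> S \<Longrightarrow> E Q \<in> sets M"
    and "\<And>Q x. Q \<in> S \<Longrightarrow> x \<in> E Q \<Longrightarrow> a Q \<le> F x"
    and "\<And>Q x. Q \<in> S \<Longrightarrow> x \<in> E Q \<Longrightarrow> b Q \<le> G x" and "1 \<le> p"
  shows "(\<Sum>Q\<in>Fin. a Q * b Q * emeasure M (E Q)) \<le> Lp_enn (ereal p) M F * Lp_enn (dual_exp p) M G"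
proof -
  define f where "f x = (\<Sum>Q\<in>Fin. a Q * indicator (E Q) x)" for x
  define g where "g x = (\<Sum>Q\<in>Fin. b Q * indicator (E Q) x)" for x
  have E: "\<And>Q. Q \<in> Fin \<Longrightarrow> E Q \<in> sets M"
    using assms(2,4) by blast
  have [measurable]: "f \<in> borel_measurable M" "g \<in> borel_measurable M"
    unfolding f_def[abs_def] g_def[abs_def] using E by (auto intro: borel_measurable_sum_cmult_indicator)
  have "(\<Sum>Q\<in>Fin. a Q * b Q * emeasure M (E Q)) = (\<integral>\<^sup>+ x. (\<Sum>Q\<in>Fin. a Q * b Q * indicator (E Q) x) \<partial>M)"
    using E by (simp add: nn_integral_sum nn_integral_cmult_indicator)
  also have "\<dots> = (\<integral>\<^sup>+ x. f x * g x \<partial>M)"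
    by (simp add: f_def g_def sum_indicator_disjoint_mult[OF assms(1-3)])
  also have "\<dots> \<le> Lp_enn (ereal p) M f * Lp_enn (dual_exp p) M g"
    using assms(7) by (intro nn_integral_Hoelder) auto
  also have "\<dots> \<le> Lp_enn (ereal p) M F * Lp_enn (dual_exp p) M G"
    using assms(2,5,6,7)
    by (intro mult_mono Lp_enn_mono dual_exp_pos)
      (auto simp: f_def g_def intro!: sum_indicator_disjoint_le[OF assms(1-3)])
  finally show ?thesis .
qed

lemma infsum_le_cmult_finite_sums_ennreal:
  fixes f u :: "'i \<Rightarrow> ennreal"
  assumes "\<And>Q. Q \<in> S \<Longrightarrow> f Q \<le> c * u Q"
    and "\<And>Fin. finite Fin \<Longrightarrow> Fin \<subseteq> S \<Longrightarrow> sum u Fin \<le> b"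
  shows "(\<Sum>\<^sub>\<infinity>Q\<in>S. f Q) \<le> c * b"
proof (rule infsum_le_finite_sums)
  fix Fin assume "finite Fin" "Fin \<subseteq> S"
  then have "sum f Fin \<le> c * sum u Fin"
    unfolding sum_distrib_left using assms(1) by (intro sum_mono) blast
  also have "\<dots> \<le> c * b"
    using assms(2)[OF \<open>finite Fin\<close> \<open>Fin \<subseteq> S\<close>] by (rule mult_left_mono) simp
  finally show "sum f Fin \<le> c * b" .
qed (simp add: nonneg_summable_on_complete)

lemma measure_le_emeasure_portion:
  assumes "E \<subseteq> Q" "E \<in> sets M" "Q \<in> sets M" "emeasure M Q \<noteq> \<infinity>"
    and "0 < \<eta>" "\<eta> * measure M Q \<le> measure M E"
  shows "ennreal (measure M Q) \<le> ennreal (1 / \<eta>) * emeasure M E"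
proof -
  have "emeasure M E \<le> emeasure M Q"
    using assms(1,3) by (rule emeasure_mono)
  then have "emeasure M E = ennreal (measure M E)"
    using assms(4) by (intro emeasure_eq_ennreal_measure) (auto simp: top_unique)
  moreover have "measure M Q \<le> 1 / \<eta> * measure M E"
    using assms(5,6) by (simp add: field_simps)
  ultimately show ?thesis
    using assms(5) by (simp add: ennreal_leI flip: ennreal_mult)
qed

lemma sparse_sum_le_maxop:
  fixes A B :: "real^'d \<Rightarrow> real^'n^'n" and U V :: "(real^'d) set \<Rightarrow> real^'n^'n"
    and h g :: "real^'d \<Rightarrow> real^'n"
  assumes "1 \<le> p" "1 \<le> r" "1 \<le> s" "\<forall>Q\<in>cubes. spd (U Q)" "\<forall>Q\<in>cubes. spd (V Q)"
    and "0 < \<eta>" "sparse \<eta> S"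
  shows "(\<Sum>\<^sub>\<infinity>Q\<in>S. body_prod (cbody r Q (\<lambda>x. A x *v h x)) (cbody s Q (\<lambda>x. B x *v g x))
                     * ennreal (measure lebesgue Q))
         \<le> ennreal (1 / \<eta>) * (SUP Q\<in>cubes. ennreal (opnorm (V Q ** U Q)))
             * Lp_enn (ereal p) lebesgue (maxop V A r h)
             * Lp_enn (dual_exp p) lebesgue (maxop U B s g)"
proof -
  obtain E where E: "\<And>Q. Q \<in> S \<Longrightarrow> E Q \<in> sets lebesgue \<and> E Q \<subseteq> Q
                        \<and> \<eta> * measure lebesgue Q \<le> measure lebesgue (E Q)"
    and disj: "disjoint_family_on E S" and "S \<subseteq> cubes"
    using assms(7) unfolding sparse_def by blast
  define \<alpha> where
    "\<alpha> Q = Lp_norm (ereal r) (uniform_measure lebesgue Q) (\<lambda>x. matrix_inv (V Q) *v (A x *v h x))" for Q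
  define \<beta> where
    "\<beta> Q = Lp_norm (ereal s) (uniform_measure lebesgue Q) (\<lambda>x. matrix_inv (U Q) *v (B x *v g x))" for Q
  define \<sigma> where "\<sigma> = (SUP Q\<in>cubes. ennreal (opnorm (V Q ** U Q)))"
  have "body_prod (cbody r Q (\<lambda>x. A x *v h x)) (cbody s Q (\<lambda>x. B x *v g x))
          * ennreal (measure lebesgue Q)
        \<le> ennreal (1 / \<eta>) * \<sigma> * (\<alpha> Q * \<beta> Q * emeasure lebesgue (E Q))" if "Q \<in> S" for Q
  proof -
    have Q: "Q \<in> cubes"
      using that \<open>S \<subseteq> cubes\<close> by blast
    have "body_prod (cbody r Q (\<lambda>x. A x *v h x)) (cbody s Q (\<lambda>x. B x *v g x))
        \<le> ennreal (opnorm (V Q ** U Q)) * \<alpha> Q * \<beta> Q"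
      unfolding \<alpha>_def \<beta>_def using assms(2-5) Q
      by (intro body_prod_cbody_le cube_lebesgue_measure[OF Q]) auto
    also have "\<dots> \<le> \<sigma> * (\<alpha> Q * \<beta> Q)"
      unfolding \<sigma>_def mult.assoc using Q by (intro mult_right_mono SUP_upper) auto
    finally have "body_prod (cbody r Q (\<lambda>x. A x *v h x)) (cbody s Q (\<lambda>x. B x *v g x))
        \<le> \<sigma> * (\<alpha> Q * \<beta> Q)" .
    moreover have "ennreal (measure lebesgue Q) \<le> ennreal (1 / \<eta>) * emeasure lebesgue (E Q)"
      using E[OF that] cube_lebesgue_measure[OF Q] assms(6) by (intro measure_le_emeasure_portion) auto
    ultimately have "body_prod (cbody r Q (\<lambda>x. A x *v h x)) (cbody s Q (\<lambda>x. B x *v g x))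
          * ennreal (measure lebesgue Q)
        \<le> \<sigma> * (\<alpha> Q * \<beta> Q) * (ennreal (1 / \<eta>) * emeasure lebesgue (E Q))"
      by (rule mult_mono) auto
    then show ?thesis
      by (simp add: mult_ac)
  qed
  moreover have "\<alpha> Q \<le> maxop V A r h x" "\<beta> Q \<le> maxop U B s g x" if "Q \<in> S" "x \<in> E Q" for Q x
    unfolding maxop_def \<alpha>_def \<beta>_def using that E[OF that(1)] \<open>S \<subseteq> cubes\<close>
    by (intro SUP_upper; auto)+
  then have "(\<Sum>Q\<in>Fin. \<alpha> Q * \<beta> Q * emeasure lebesgue (E Q))
      \<le> Lp_enn (ereal p) lebesgue (maxop V A r h) * Lp_enn (dual_exp p) lebesgue (maxop U B s g)"
    if "finite Fin" "Fin \<subseteq> S" for Fin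
    using E assms(1) by (intro sum_disjoint_le_Lp_Hoelder[OF disj that(2,1)]) blast+
  ultimately show ?thesis
    unfolding \<sigma>_def mult.assoc[of _ _ "Lp_enn (dual_exp p) lebesgue (maxop U B s g)"]
    by (rule infsum_le_cmult_finite_sums_ennreal)
qed

section \<open>Boundedness of the maximal operators\<close>

lemma SUP_mult_indicator_incseq:
  fixes c :: ennreal
  assumes "incseq B"
  shows "(SUP k. c * indicator (B k) x) = c * indicator (\<Union>k. B k) x"
proof (cases "x \<in> (\<Union>k. B k)")
  case True
  then obtain k0 where "x \<in> B k0"
    by blast
  then have "c \<le> (SUP k. c * indicator (B k) x)"
    by (intro SUP_upper2[of k0]) auto
  with True show ?thesis
    by (auto intro!: antisym SUP_least simp: indicator_def)
qed auto

lemma nn_integral_indicator_incseq: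
  assumes "incseq B" "\<And>k. B k \<in> sets M"
  shows "(\<integral>\<^sup>+ x. f x * indicator (\<Union>k. B k) x \<partial>M) = (SUP k. \<integral>\<^sup>+ x. f x * indicator (B k) x \<partial>M)"
proof (rule antisym)
  show "(SUP k. \<integral>\<^sup>+ x. f x * indicator (B k) x \<partial>M) \<le> (\<integral>\<^sup>+ x. f x * indicator (\<Union>k. B k) x \<partial>M)"
    by (intro SUP_least nn_integral_mono mult_left_mono) (auto simp: indicator_def)
  \<comment> \<open>\<open>f\<close> need not be measurable, so we approximate by simple functions below it\<close>
  have "integral\<^sup>S M g \<le> (SUP k. \<integral>\<^sup>+ x. f x * indicator (B k) x \<partial>M)"
    if g: "simple_function M g" "g \<le> (\<lambda>x. f x * indicator (\<Union>k. B k) x)" for g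
  proof -
    have [measurable]: "g \<in> borel_measurable M"
      using g(1) by (rule borel_measurable_simple_function)
    have g_U: "g x = g x * indicator (\<Union>k. B k) x" for x
      using g(2) by (auto simp: le_fun_def indicator_def split: if_splits dest: spec[of _ x])
    have gf: "g x \<le> f x" for x
      using le_funD[OF g(2), of x] g_U[of x] by (cases "x \<in> (\<Union>k. B k)") auto
    have "g x = (SUP k. g x * indicator (B k) x)" for x
      using g_U by (simp add: SUP_mult_indicator_incseq[OF assms(1)])
    then have "integral\<^sup>S M g = (\<integral>\<^sup>+ x. (SUP k. g x * indicator (B k) x) \<partial>M)"
      using g(1) by (simp add: nn_integral_eq_simple_integral)
    also have "\<dots> = (SUP k. \<integral>\<^sup>+ x. g x * indicator (B k) x \<partial>M)"
      using assms by (intro nn_integral_monotone_convergence_SUP)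
        (auto simp: incseq_def le_fun_def indicator_def subset_eq)
    also have "\<dots> \<le> (SUP k. \<integral>\<^sup>+ x. f x * indicator (B k) x \<partial>M)"
      using gf by (intro SUP_mono' nn_integral_mono mult_right_mono) auto
    finally show ?thesis .
  qed
  then show "(\<integral>\<^sup>+ x. f x * indicator (\<Union>k. B k) x \<partial>M) \<le> (SUP k. \<integral>\<^sup>+ x. f x * indicator (B k) x \<partial>M)"
    unfolding nn_integral_def[of M "\<lambda>x. f x * indicator (\<Union>k. B k) x"] by (auto intro: SUP_least)
qed

lemma Lp_norm_truncation_neq_0:
  fixes h :: "'a \<Rightarrow> 'b::real_normed_vector" and L :: "'a \<Rightarrow> 'b \<Rightarrow> 'c::real_normed_vector"
  assumes [measurable]: "h \<in> borel_measurable M" "Q \<in> sets M" and "\<And>x. L x 0 = 0"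
    and "Lp_norm (ereal r) (uniform_measure M Q) (\<lambda>x. L x (h x)) \<noteq> 0"
  shows "\<exists>k::nat. Lp_norm (ereal r) (uniform_measure M Q)
           (\<lambda>x. L x (indicator {x\<in>Q. norm (h x) \<le> real k} x *\<^sub>R h x)) \<noteq> 0"
proof -
  define \<Phi> where "\<Phi> x = enn_powr (ennreal (norm (L x (h x)))) r" for x
  define B where "B k = {x\<in>Q. norm (h x) \<le> real k}" for k :: nat
  have B: "incseq B" "\<And>k. B k \<in> sets (uniform_measure M Q)" "(\<Union>k. B k) = Q"
    by (auto simp: B_def incseq_def real_arch_simple)
  have "AE x in uniform_measure M Q. \<Phi> x = \<Phi> x * indicator Q x"
    by (intro AE_uniform_measureI) auto
  then have "(\<integral>\<^sup>+ x. \<Phi> x \<partial>uniform_measure M Q) = (\<integral>\<^sup>+ x. \<Phi> x * indicator Q x \<partial>uniform_measure M Q)"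
    by (rule nn_integral_cong_AE)
  also have "\<dots> = (SUP k. \<integral>\<^sup>+ x. \<Phi> x * indicator (B k) x \<partial>uniform_measure M Q)"
    using nn_integral_indicator_incseq[OF B(1,2), of \<Phi>] by (simp add: B(3))
  finally have "(SUP k. \<integral>\<^sup>+ x. \<Phi> x * indicator (B k) x \<partial>uniform_measure M Q) \<noteq> 0"
    using assms(4) by (simp add: \<Phi>_def Lp_norm_def Lp_enn_ereal)
  then obtain k where k: "(\<integral>\<^sup>+ x. \<Phi> x * indicator (B k) x \<partial>uniform_measure M Q) \<noteq> 0"
    by (metis (mono_tags) SUP_least le_zero_eq)
  have "\<Phi> x * indicator (B k) x = enn_powr (ennreal (norm (L x (indicator (B k) x *\<^sub>R h x)))) r" for x
    using assms(3) by (simp add: \<Phi>_def indicator_def)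
  with k show ?thesis
    by (intro exI[of _ k]) (simp add: Lp_norm_def Lp_enn_ereal B_def)
qed

lemma Lp_norm_truncation_finite:
  fixes h :: "'a \<Rightarrow> 'b::real_normed_vector"
  assumes [measurable]: "h \<in> borel_measurable M" "Q \<in> sets M" and "emeasure M Q \<noteq> \<infinity>" "0 < P"
  shows "Lp_norm P M (\<lambda>x. indicator {x\<in>Q. norm (h x) \<le> real k} x *\<^sub>R h x) \<noteq> \<infinity>"
proof -
  have "Lp_norm P M (\<lambda>x. indicator {x\<in>Q. norm (h x) \<le> real k} x *\<^sub>R h x)
      \<le> Lp_enn P M (\<lambda>x. ennreal (real k) * indicator Q x)"
    unfolding Lp_norm_def using assms(4) by (intro Lp_enn_mono) (auto simp: indicator_def)
  moreover have "Lp_enn P M (\<lambda>x. ennreal (real k) * indicator Q x) \<noteq> \<infinity>"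
    using assms by (intro Lp_enn_cmult_indicator_finite) auto
  ultimately show ?thesis
    by (auto simp: top_unique)
qed

lemma maxop_scaleR:
  assumes "0 < k" "0 < r"
  shows "maxop V A r (\<lambda>x. k *\<^sub>R h x) = (\<lambda>z. ennreal k * maxop V A r h z)"
proof -
  have "(\<lambda>x. matrix_inv (V Q) *v (A x *v (k *\<^sub>R h x)))
      = (\<lambda>x. k *\<^sub>R (matrix_inv (V Q) *v (A x *v h x)))" for Q
    by (simp add: matrix_vector_mult_scaleR)
  then show ?thesis
    using assms by (intro ext) (simp add: maxop_def Lp_norm_scaleR SUP_mult_left_ennreal)
qed

lemma maxop_AE_zero:
  assumes "AE x in lebesgue. h x = 0"
  shows "maxop V A r h z = 0"
  unfolding maxop_def
proof (intro antisym[OF SUP_least zero_le])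
  fix Q assume "Q \<in> {Q \<in> cubes. z \<in> Q}"
  then have "AE x in uniform_measure lebesgue Q. h x = 0"
    using assms cube_lebesgue_measure(1)[of Q] by (intro AE_uniform_measureI) auto
  then have "(\<integral>\<^sup>+ x. enn_powr (ennreal (norm (matrix_inv (V Q) *v (A x *v h x)))) r
               \<partial>uniform_measure lebesgue Q) = 0"
    by (subst nn_integral_cong_AE[where v = "\<lambda>x. 0"]) (auto elim: eventually_mono)
  then show "Lp_norm (ereal r) (uniform_measure lebesgue Q) (\<lambda>x. matrix_inv (V Q) *v (A x *v h x)) \<le> 0"
    by (simp add: Lp_norm_def Lp_enn_ereal)
qed

lemma Lp_enn_maxop_eq_0:
  assumes "h \<in> borel_measurable lebesgue" "Lp_norm P lebesgue h = 0" "0 < P"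
  shows "Lp_enn P lebesgue (maxop V A r h) = 0"
proof -
  have "maxop V A r h = (\<lambda>z. 0)"
    using AE_zero_if_Lp_norm_eq_0[OF assms] by (auto intro: maxop_AE_zero)
  then show ?thesis
    by (simp add: Lp_enn_zero assms(3))
qed

lemma Lp_enn_le_op_Lp_norm:
  fixes T :: "(real^'d \<Rightarrow> real^'n) \<Rightarrow> real^'d \<Rightarrow> ennreal"
  assumes hom: "\<And>k f. 0 < k \<Longrightarrow> T (\<lambda>x. k *\<^sub>R f x) = (\<lambda>z. ennreal k * T f z)"
    and "h \<in> borel_measurable lebesgue" "Lp_norm P lebesgue h = ennreal \<tau>" "0 < \<tau>" "0 < P"
  shows "Lp_enn P lebesgue (T h) \<le> op_Lp_norm P T * Lp_norm P lebesgue h"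
proof -
  define f where "f x = (1 / \<tau>) *\<^sub>R h x" for x
  have "f \<in> borel_measurable lebesgue"
    unfolding f_def using assms(2) by measurable
  moreover have "Lp_norm P lebesgue f = 1"
    using assms(3-5) by (simp add: f_def[abs_def] Lp_norm_scaleR flip: ennreal_mult)
  ultimately have "Lp_enn P lebesgue (T f) \<le> op_Lp_norm P T"
    unfolding op_Lp_norm_def by (intro SUP_upper) auto
  moreover have "T h = (\<lambda>z. ennreal \<tau> * T f z)"
    using hom[OF \<open>0 < \<tau>\<close>, of f] assms(4) by (simp add: f_def)
  ultimately show ?thesis
    using assms(3-5) by (simp add: Lp_enn_cmult mult.commute mult_left_mono)
qed

lemma Lp_enn_maxop_neq_0:
  assumes "Q \<in> cubes" and "0 < P"
    and "Lp_norm (ereal r) (uniform_measure lebesgue Q) (\<lambda>x. matrix_inv (V Q) *v (A x *v f x)) \<noteq> 0"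
  shows "Lp_enn P lebesgue (maxop V A r f) \<noteq> 0"
proof -
  define c where
    "c = Lp_norm (ereal r) (uniform_measure lebesgue Q) (\<lambda>x. matrix_inv (V Q) *v (A x *v f x))"
  note Q = cube_lebesgue_measure[OF assms(1)]
  have "c * indicator Q z \<le> maxop V A r f z" for z
    using assms(1) unfolding maxop_def c_def by (cases "z \<in> Q") (auto intro: SUP_upper)
  then have "Lp_enn P lebesgue (\<lambda>x. c * indicator Q x) \<le> Lp_enn P lebesgue (maxop V A r f)"
    using Q(1) assms(2) by (intro Lp_enn_mono) auto
  moreover have "Lp_enn P lebesgue (\<lambda>x. c * indicator Q x) \<noteq> 0"
    using Q assms(2,3) by (intro Lp_enn_cmult_indicator_neq_0) (auto simp: c_def)
  ultimately show ?thesis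
    by auto
qed

lemma op_Lp_norm_maxop_neq_0:
  assumes [measurable]: "h \<in> borel_measurable lebesgue"
    and "Lp_enn P lebesgue (maxop V A r h) \<noteq> 0" "0 < r" "0 < P"
  shows "op_Lp_norm P (maxop V A r) \<noteq> 0"
proof -
  have "maxop V A r h \<noteq> (\<lambda>z. 0)"
    using assms(2) by (auto simp: Lp_enn_zero assms(4))
  then obtain z where "maxop V A r h z \<noteq> 0"
    by auto
  then obtain Q where Q: "Q \<in> cubes" "z \<in> Q"
    and "Lp_norm (ereal r) (uniform_measure lebesgue Q) (\<lambda>x. matrix_inv (V Q) *v (A x *v h x)) \<noteq> 0"
    unfolding maxop_def by (metis (mono_tags, lifting) SUP_least le_zero_eq mem_Collect_eq)
  \<comment> \<open>replace \<open>h\<close> by a bounded truncation supported in \<open>Q\<close>, which has finite norm\<close>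
  then obtain k :: nat where "Lp_norm (ereal r) (uniform_measure lebesgue Q)
      (\<lambda>x. matrix_inv (V Q) *v (A x *v (indicator {x\<in>Q. norm (h x) \<le> real k} x *\<^sub>R h x))) \<noteq> 0"
    using Lp_norm_truncation_neq_0[OF assms(1) cube_lebesgue_measure(1)[OF Q(1)],
        of "\<lambda>x v. matrix_inv (V Q) *v (A x *v v)"] by auto
  moreover define f where "f x = indicator {x\<in>Q. norm (h x) \<le> real k} x *\<^sub>R h x" for x
  ultimately have Mf: "Lp_enn P lebesgue (maxop V A r f) \<noteq> 0"
    using Lp_enn_maxop_neq_0[OF Q(1) assms(4)] by (simp add: f_def[abs_def])
  have [measurable]: "Q \<in> sets lebesgue"
    using cube_lebesgue_measure(1)[OF Q(1)] .
  have f: "f \<in> borel_measurable lebesgue"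
    unfolding f_def by measurable
  have "Lp_norm P lebesgue f \<noteq> 0"
    using Mf Lp_enn_maxop_eq_0[OF f _ assms(4)] by blast
  moreover have "Lp_norm P lebesgue f \<noteq> \<infinity>"
    unfolding f_def[abs_def] using cube_lebesgue_measure[OF Q(1)] assms(4)
    by (intro Lp_norm_truncation_finite) auto
  ultimately obtain \<tau> where \<tau>: "Lp_norm P lebesgue f = ennreal \<tau>" "0 < \<tau>"
    by (cases "Lp_norm P lebesgue f") (auto simp: zero_less_iff_neq_zero)
  have "Lp_enn P lebesgue (maxop V A r f) \<le> op_Lp_norm P (maxop V A r) * ennreal \<tau>"
    using Lp_enn_le_op_Lp_norm[OF _ f \<tau> assms(4)] maxop_scaleR assms(3) \<tau>(1) by metis
  with Mf show ?thesis
    by auto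
qed

lemma Lp_enn_maxop_le:
  assumes "h \<in> borel_measurable lebesgue" "0 < r" "0 < P"
  shows "Lp_enn P lebesgue (maxop V A r h) \<le> op_Lp_norm P (maxop V A r) * Lp_norm P lebesgue h"
proof -
  consider "Lp_norm P lebesgue h = 0" | "Lp_norm P lebesgue h = \<infinity>"
    | \<tau> where "Lp_norm P lebesgue h = ennreal \<tau>" "0 < \<tau>"
    by (cases "Lp_norm P lebesgue h") (auto simp: less_le)
  then show ?thesis
  proof cases
    case 1
    then show ?thesis
      using Lp_enn_maxop_eq_0[OF assms(1) 1 assms(3)] by simp
  next
    case 2
    \<comment> \<open>in \<open>ennreal\<close>, \<open>0 * \<infinity> = 0\<close>: the operator norm must be shown to be nonzero\<close>
    then show ?thesis
      using op_Lp_norm_maxop_neq_0[OF assms(1) _ assms(2,3), of V A]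
      by (cases "Lp_enn P lebesgue (maxop V A r h) = 0") (auto simp: ennreal_mult_top)
  next
    case 3
    then show ?thesis
      using Lp_enn_le_op_Lp_norm[OF _ assms(1) 3 assms(3)] maxop_scaleR assms(2) by metis
  qed
qed

theorem mainTheorem11:
  fixes p r s \<eta> :: real
    and W :: "real^'d \<Rightarrow> real^'n^'n"
    and U V :: "(real^'d) set \<Rightarrow> real^'n^'n"
    and S :: "(real^'d) set set"
    and h g :: "real^'d \<Rightarrow> real^'n"
  assumes "1 \<le> p" "1 \<le> r" "1 \<le> s"
    and "W \<in> borel_measurable lebesgue" "AE x in lebesgue. spd (W x)"
    and "\<forall>Q\<in>cubes. spd (U Q)" "\<forall>Q\<in>cubes. spd (V Q)"
    and "0 < \<eta>" "\<eta> < 1" "sparse \<eta> S"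
    and "h \<in> borel_measurable lebesgue" "g \<in> borel_measurable lebesgue"
  shows "(\<Sum>\<^sub>\<infinity>Q\<in>S. body_prod (cbody r Q (\<lambda>x. matpow (W x) (- 1 / p) *v h x))
                                 (cbody s Q (\<lambda>x. matpow (W x) (1 / p) *v g x))
                     * ennreal (measure lebesgue Q))
         \<le> ennreal (1 / \<eta>) * (SUP Q\<in>cubes. ennreal (opnorm (V Q ** U Q)))
             * Lp_enn (ereal p) lebesgue (maxop V (\<lambda>x. matpow (W x) (- 1 / p)) r h)
             * Lp_enn (dual_exp p) lebesgue (maxop U (\<lambda>x. matpow (W x) (1 / p)) s g)
       \<and> ennreal (1 / \<eta>) * (SUP Q\<in>cubes. ennreal (opnorm (V Q ** U Q)))
             * Lp_enn (ereal p) lebesgue (maxop V (\<lambda>x. matpow (W x) (- 1 / p)) r h)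
             * Lp_enn (dual_exp p) lebesgue (maxop U (\<lambda>x. matpow (W x) (1 / p)) s g)
         \<le> ennreal (1 / \<eta>) * (SUP Q\<in>cubes. ennreal (opnorm (V Q ** U Q)))
             * op_Lp_norm (ereal p) (maxop V (\<lambda>x. matpow (W x) (- 1 / p)) r)
             * op_Lp_norm (dual_exp p) (maxop U (\<lambda>x. matpow (W x) (1 / p)) s)
             * Lp_norm (ereal p) lebesgue h * Lp_norm (dual_exp p) lebesgue g"
proof -
  let ?c = "ennreal (1 / \<eta>) * (SUP Q\<in>cubes. ennreal (opnorm (V Q ** U Q)))"
  let ?Mh = "maxop V (\<lambda>x. matpow (W x) (- 1 / p)) r"
  let ?Mg = "maxop U (\<lambda>x. matpow (W x) (1 / p)) s"
  have "Lp_enn (ereal p) lebesgue (?Mh h) \<le> op_Lp_norm (ereal p) ?Mh * Lp_norm (ereal p) lebesgue h"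
    using assms(1,2,11) by (intro Lp_enn_maxop_le) auto
  moreover have "Lp_enn (dual_exp p) lebesgue (?Mg g)
      \<le> op_Lp_norm (dual_exp p) ?Mg * Lp_norm (dual_exp p) lebesgue g"
    using assms(1,3,12) by (intro Lp_enn_maxop_le dual_exp_pos) auto
  ultimately have "?c * Lp_enn (ereal p) lebesgue (?Mh h) * Lp_enn (dual_exp p) lebesgue (?Mg g)
      \<le> ?c * (op_Lp_norm (ereal p) ?Mh * Lp_norm (ereal p) lebesgue h)
          * (op_Lp_norm (dual_exp p) ?Mg * Lp_norm (dual_exp p) lebesgue g)"
    by (intro mult_mono) auto
  also have "\<dots> = ?c * op_Lp_norm (ereal p) ?Mh * op_Lp_norm (dual_exp p) ?Mg
      * Lp_norm (ereal p) lebesgue h * Lp_norm (dual_exp p) lebesgue g"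
    by (simp only: mult_ac)
  finally show ?thesis
    using sparse_sum_le_maxop[OF assms(1-3,6-8,10), of "\<lambda>x. matpow (W x) (- 1 / p)" h
        "\<lambda>x. matpow (W x) (1 / p)" g]
    by blast
qed

end
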